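(* Let $\mathcal X\subset\mathbb R^p$ be a finite set (with Euclidean distance $d$) having a convex-nice clustering $\mathcal C=\{C_1,\ldots,C_k\}$, and let $\beta=\min_i|C_i|/|\mathcal X|$. Let $\ell$ be an integer with $k\le\ell\le|\mathcal X|$. If the points of $\mathcal X$ are presented in a uniformly random order, then with probability at least $1-ke^{-\beta\ell}$, the final centers of sequential $\ell$-means induce a clustering of $\mathcal X$ that is a refinement of $\mathcal C$.
   Context: A clustering of $\mathcal X$ is a set of nonempty, pairwise disjoint subsets whose union is $\mathcal X$. A clustering $\mathcal C=\{C_1,\ldots,C_k\}$ is convex-nice if for any $i\ne j$, any points $x,y$ in the convex hull of $C_i$ and any point $z$ in the convex hull of $C_j$, $d(y,x)<d(z,x)$. A list $T=(t_1,\ldots,t_m)$ induces the clustering of $\mathcal X$ assigning each $x$ to the index $i$ minimizing $\|x-t_i\|$ (ties broken by smallest $i$), empty clusters discarded. $\mathcal C$ is a refinement of $\mathcal C'$ if $x\sim_{\mathcal C}y$ implies $x\sim_{\mathcal C'}y$, where $x\sim_{\mathcal C}y$ means $x,y$ lie in the same cluster of $\mathcal C$. Sequential $\ell$-means on input sequence $x_1,\ldots,x_N$: set $t_i=x_i$ and $n_i=1$ for $i=1,\ldots,\ell$; then for each subsequent point $x$: let $i$ be the index of the closest center to $x$ (ties by smallest index), increment $n_i$, and replace $t_i$ by $t_i+(1/n_i)(x-t_i)$. Output the final $(t_1,\ldots,t_\ell)$. *)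

theory Defs
  imports "HOL-Probability.Probability" "HOL-Combinatorics.Multiset_Permutations"
begin

definition is_clustering :: "'a set \<Rightarrow> 'a set set \<Rightarrow> bool" where
  "is_clustering X C \<longleftrightarrow> (\<forall>A\<in>C. A \<noteq> {}) \<and>
     (\<forall>A\<in>C. \<forall>B\<in>C. A \<noteq> B \<longrightarrow> A \<inter> B = {}) \<and> \<Union>C = X"

definition convex_nice :: "'a::euclidean_space set set \<Rightarrow> bool" where
  "convex_nice C \<longleftrightarrow> (\<forall>Ci\<in>C. \<forall>Cj\<in>C. Ci \<noteq> Cj \<longrightarrow>
     (\<forall>x\<in>convex hull Ci. \<forall>y\<in>convex hull Ci. \<forall>z\<in>convex hull Cj. dist y x < dist z x))"

definition same_cluster :: "'a set set \<Rightarrow> 'a \<Rightarrow> 'a \<Rightarrow> bool" where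
  "same_cluster C x y \<longleftrightarrow> (\<exists>A\<in>C. x \<in> A \<and> y \<in> A)"

definition refines :: "'a set set \<Rightarrow> 'a set set \<Rightarrow> bool" where
  "refines C C' \<longleftrightarrow> (\<forall>x y. same_cluster C x y \<longrightarrow> same_cluster C' x y)"

definition closest_idx :: "'a::euclidean_space list \<Rightarrow> 'a \<Rightarrow> nat" where
  "closest_idx T x = (LEAST i. i < length T \<and>
      (\<forall>j<length T. norm (x - T ! i) \<le> norm (x - T ! j)))"

definition induced_clustering :: "'a::euclidean_space list \<Rightarrow> 'a set \<Rightarrow> 'a set set" where
  "induced_clustering T X =
     {A. A \<noteq> {} \<and> (\<exists>i<length T. A = {x\<in>X. closest_idx T x = i})}"

text \<open>One step of sequential means: state = (centers, counts).\<close>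
definition seq_step :: "'a::euclidean_space list \<times> nat list \<Rightarrow> 'a \<Rightarrow> 'a list \<times> nat list" where
  "seq_step s x = (let T = fst s; n = snd s; i = closest_idx T x; m = n ! i + 1 in
     (T[i := T ! i + (1 / real m) *\<^sub>R (x - T ! i)], n[i := m]))"

definition seq_means :: "nat \<Rightarrow> 'a::euclidean_space list \<Rightarrow> 'a list" where
  "seq_means l xs = fst (foldl seq_step (take l xs, replicate l 1) (drop l xs))"

end

theory Submission
  imports Defs
begin

(*
  The proof separates a deterministic geometric fact from a counting estimate.

  Geometry: call a list of centres T adapted to C if every centre lies in the
  convex hull of some cluster and every cluster hull contains some centre.
  For a convex-nice C the cluster hulls are pairwise disjoint, and under an
  adapted T the closest centre to a point of a cluster lies in that cluster's
  hull.  Hence one step of sequential means moves a centre along a segment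
  inside that hull, so adaptedness is invariant; and an adapted T induces a
  refinement of C.  The initial centres (the first l input points) are adapted
  as soon as they meet every cluster.

  Counting: among the |X|! orderings of X, at most (1 - |A|/|X|)^l |X|! have
  their first l entries avoiding A, so this event has probability at most
  exp (-|A| l / |X|).  A union bound over the clusters gives the theorem.
*)

section \<open>Orderings whose prefix avoids a set\<close>

definition avoiding_perms :: "'a set \<Rightarrow> 'a set \<Rightarrow> nat \<Rightarrow> 'a list set" where
  "avoiding_perms X A l = permutations_of_set X \<inter> {xs. set (take l xs) \<inter> A = {}}"

lemma avoiding_perms_Suc:
  assumes "finite X" "X \<noteq> {}"
  shows "avoiding_perms X A (Suc l) = (\<Union>x\<in>X - A. (#) x ` avoiding_perms (X - {x}) A l)"
  unfolding avoiding_perms_def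
  by (subst permutations_of_set_nonempty[OF assms(2)]) auto

text \<open>Counting version: the pieces of that union are disjoint (distinct first entries)
  and prepending x is injective.\<close>
lemma card_avoiding_perms_Suc:
  assumes "finite X" "X \<noteq> {}"
  shows "card (avoiding_perms X A (Suc l)) = (\<Sum>x\<in>X - A. card (avoiding_perms (X - {x}) A l))"
proof -
  have "card (avoiding_perms X A (Suc l)) = (\<Sum>x\<in>X - A. card ((#) x ` avoiding_perms (X - {x}) A l))"
    unfolding avoiding_perms_Suc[OF assms]
    by (rule card_UN_disjoint) (use assms in \<open>auto simp: avoiding_perms_def\<close>)
  also have "\<dots> = (\<Sum>x\<in>X - A. card (avoiding_perms (X - {x}) A l))"
    by (intro sum.cong refl card_image) auto
  finally show ?thesis .
qed

text \<open>The arithmetic behind the inductive step of the counting bound: removing one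
  point outside A from a set of n points only increases the density a/n of A.\<close>
lemma avoiding_bound_step:
  fixes a n l :: nat
  assumes "a \<le> n" "1 \<le> n"
  shows "real (n - a) * ((1 - real a / real (n - 1)) ^ l * fact (n - 1))
         \<le> (1 - real a / real n) ^ Suc l * fact n"
proof (cases "a = n")
  case True
  then show ?thesis by simp
next
  case False
  then have "a \<le> n - 1" using assms(1) by auto
  then have nonneg: "0 \<le> 1 - real a / real (n - 1)"
    by (cases "n - 1 = 0") (auto simp: divide_le_eq)
  have "real a / real n \<le> real a / real (n - 1)"
    using \<open>a \<le> n - 1\<close> by (cases "a = 0") (auto intro: divide_left_mono)
  then have "(1 - real a / real (n - 1)) ^ l \<le> (1 - real a / real n) ^ l"
    using nonneg by (intro power_mono) auto
  then have "real (n - a) * ((1 - real a / real (n - 1)) ^ l * fact (n - 1))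
             \<le> real (n - a) * ((1 - real a / real n) ^ l * fact (n - 1))"
    by (intro mult_left_mono mult_right_mono) auto
  also have "\<dots> = (1 - real a / real n) ^ Suc l * fact n"
  proof -
    have "fact n = real n * fact (n - 1)" using assms(2) fact_reduce[of n] by simp
    then show ?thesis using assms by (simp add: field_simps of_nat_diff)
  qed
  finally show ?thesis .
qed

lemma card_avoiding_perms:
  assumes "finite X" "A \<subseteq> X" "l \<le> card X"
  shows "real (card (avoiding_perms X A l)) \<le> (1 - real (card A) / real (card X)) ^ l * fact (card X)"
  using assms
proof (induction l arbitrary: X)
  case 0
  then show ?case by (simp add: avoiding_perms_def card_mono)
next
  case (Suc l)
  define n where "n = card X"
  have "X \<noteq> {}" "1 \<le> n" using Suc.prems n_def by auto
  have card_rest: "card (X - {x}) = n - 1" if "x \<in> X" for x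
    using that Suc.prems(1) n_def by simp
  let ?r = "(1 - real (card A) / real (n - 1)) ^ l * fact (n - 1)"
  have "real (card (avoiding_perms X A (Suc l)))
        = (\<Sum>x\<in>X - A. real (card (avoiding_perms (X - {x}) A l)))"
    using card_avoiding_perms_Suc[OF Suc.prems(1) \<open>X \<noteq> {}\<close>] by simp
  also have "\<dots> \<le> (\<Sum>x\<in>X - A. ?r)"
  proof (rule sum_mono)
    fix x assume x: "x \<in> X - A"
    have "A \<subseteq> X - {x}" "l \<le> card (X - {x})" using x Suc.prems card_rest n_def by auto
    then have "real (card (avoiding_perms (X - {x}) A l))
               \<le> (1 - real (card A) / real (card (X - {x}))) ^ l * fact (card (X - {x}))"
      using Suc.IH[of "X - {x}"] Suc.prems(1) by blast
    then show "real (card (avoiding_perms (X - {x}) A l)) \<le> ?r"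
      using x card_rest by (simp add: n_def)
  qed
  also have "\<dots> = real (n - card A) * ?r"
    using Suc.prems finite_subset[OF Suc.prems(2,1)] by (simp add: card_Diff_subset n_def)
  also have "\<dots> \<le> (1 - real (card A) / real n) ^ Suc l * fact n"
    using avoiding_bound_step \<open>1 \<le> n\<close> Suc.prems card_mono n_def by blast
  finally show ?case by (simp add: n_def)
qed

lemma prob_prefix_avoids:
  assumes "finite X" "A \<subseteq> X" "l \<le> card X"
  shows "measure_pmf.prob (pmf_of_set (permutations_of_set X)) {xs. set (take l xs) \<inter> A = {}}
         \<le> exp (- (real (card A) / real (card X)) * real l)"
proof -
  define q where "q = real (card A) / real (card X)"
  have "q \<le> 1"
    using card_mono[OF assms(1,2)] by (cases "card X = 0") (simp_all add: q_def divide_le_eq)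
  have "measure_pmf.prob (pmf_of_set (permutations_of_set X)) {xs. set (take l xs) \<inter> A = {}}
        = real (card (avoiding_perms X A l)) / fact (card X)"
    using assms(1) by (simp add: measure_pmf_of_set avoiding_perms_def)
  also have "\<dots> \<le> (1 - q) ^ l"
    using card_avoiding_perms[OF assms] by (simp add: q_def divide_le_eq)
  also have "\<dots> \<le> exp (- q) ^ l"
    using \<open>q \<le> 1\<close> exp_ge_add_one_self[of "- q"] by (intro power_mono) auto
  also have "\<dots> = exp (- q * real l)"
    by (simp add: exp_of_nat_mult[symmetric] mult.commute)
  finally show ?thesis unfolding q_def .
qed

lemma prob_prefix_misses_some_cluster:
  assumes "finite X" "finite C" "\<And>A. A \<in> C \<Longrightarrow> A \<subseteq> X" "l \<le> card X"
  shows "measure_pmf.prob (pmf_of_set (permutations_of_set X))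
           (\<Union>A\<in>C. {xs. set (take l xs) \<inter> A = {}})
         \<le> real (card C) * exp (- (real (Min (card ` C)) / real (card X)) * real l)"
proof -
  let ?P = "pmf_of_set (permutations_of_set X)"
  let ?E = "exp (- (real (Min (card ` C)) / real (card X)) * real l)"
  have each: "measure_pmf.prob ?P {xs. set (take l xs) \<inter> A = {}} \<le> ?E" if "A \<in> C" for A
  proof -
    have "Min (card ` C) \<le> card A" using assms(2) that by simp
    then have "real (Min (card ` C)) / real (card X) \<le> real (card A) / real (card X)"
      by (intro divide_right_mono) auto
    then have "- (real (card A) / real (card X)) * real l
               \<le> - (real (Min (card ` C)) / real (card X)) * real l"
      by (intro mult_right_mono) auto
    then have "exp (- (real (card A) / real (card X)) * real l) \<le> ?E" by simp
    then show ?thesis using prob_prefix_avoids[OF assms(1) assms(3)[OF that] assms(4)] by linarith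
  qed
  have "measure_pmf.prob ?P (\<Union>A\<in>C. {xs. set (take l xs) \<inter> A = {}})
        \<le> (\<Sum>A\<in>C. measure_pmf.prob ?P {xs. set (take l xs) \<inter> A = {}})"
    by (rule measure_pmf.finite_measure_subadditive_finite[OF assms(2)]) simp
  also have "\<dots> \<le> real (card C) * ?E"
    using sum_bounded_above[of C _ ?E] each by simp
  finally show ?thesis .
qed

section \<open>Geometry of convex-nice clusterings\<close>

lemma convex_niceD:
  assumes "convex_nice C" "A \<in> C" "B \<in> C" "A \<noteq> B"
    and "x \<in> convex hull A" "y \<in> convex hull A" "z \<in> convex hull B"
  shows "dist y x < dist z x"
  using assms(1)[unfolded convex_nice_def, rule_format, OF assms(2-7)] .

text \<open>The convex hulls of distinct clusters of a convex-nice clustering are disjoint: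
  a common point t would satisfy dist t t < dist t t.\<close>
lemma convex_nice_hulls_disjoint:
  assumes "convex_nice C" "A \<in> C" "B \<in> C" "t \<in> convex hull A" "t \<in> convex hull B"
  shows "A = B"
  using convex_niceD[OF assms(1-3) _ assms(4,4,5)] by auto

lemma closest_idx_nearest:
  assumes "T \<noteq> []"
  shows "closest_idx T x < length T"
    and "\<And>j. j < length T \<Longrightarrow> norm (x - T ! closest_idx T x) \<le> norm (x - T ! j)"
proof -
  let ?d = "\<lambda>j. norm (x - T ! j)"
  have "Min (?d ` {..<length T}) \<in> ?d ` {..<length T}"
    using assms by (intro Min_in) auto
  then obtain i where "i < length T" "?d i = Min (?d ` {..<length T})" by auto
  then have "\<exists>i. i < length T \<and> (\<forall>j<length T. ?d i \<le> ?d j)" by auto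
  then have "closest_idx T x < length T \<and> (\<forall>j<length T. ?d (closest_idx T x) \<le> ?d j)"
    unfolding closest_idx_def by (rule LeastI_ex)
  then show "closest_idx T x < length T" "\<And>j. j < length T \<Longrightarrow> ?d (closest_idx T x) \<le> ?d j"
    by auto
qed

text \<open>The invariant of sequential means: every centre lies in the hull of some cluster,
  and every cluster hull contains some centre.\<close>
definition adapted_centers :: "'a::euclidean_space set set \<Rightarrow> 'a list \<Rightarrow> bool" where
  "adapted_centers C T \<longleftrightarrow> (\<forall>i<length T. \<exists>A\<in>C. T ! i \<in> convex hull A) \<and>
                          (\<forall>A\<in>C. \<exists>i<length T. T ! i \<in> convex hull A)"

text \<open>Under adapted centres, the nearest centre to a point in the hull of a cluster A
  lies in the hull of A itself: a centre in another hull is strictly farther away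
  than the centre that A's hull contains.\<close>
lemma closest_center_in_hull:
  assumes "convex_nice C" "adapted_centers C T" "A \<in> C" "x \<in> convex hull A"
  shows "closest_idx T x < length T" "T ! closest_idx T x \<in> convex hull A"
proof -
  let ?i = "closest_idx T x"
  obtain j where j: "j < length T" "T ! j \<in> convex hull A"
    using assms(2,3) unfolding adapted_centers_def by blast
  then have "T \<noteq> []" by auto
  note nearest = closest_idx_nearest[OF this, where x=x]
  show "?i < length T" by (rule nearest(1))
  then obtain B where B: "B \<in> C" "T ! ?i \<in> convex hull B"
    using assms(2) unfolding adapted_centers_def by blast
  have "B = A"
  proof (rule ccontr)
    assume "B \<noteq> A"
    then have "dist (T ! j) x < dist (T ! ?i) x"
      using convex_niceD[OF assms(1,3) B(1) _ assms(4) j(2) B(2)] by auto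
    moreover have "dist (T ! ?i) x \<le> dist (T ! j) x"
      using nearest(2)[OF j(1)] by (simp add: dist_norm norm_minus_commute)
    ultimately show False by simp
  qed
  then show "T ! ?i \<in> convex hull A" using B(2) by simp
qed

text \<open>One step of sequential means preserves adaptedness: the updated centre is a
  convex combination of the old one and the new point, both in the same hull.\<close>
lemma seq_step_adapted:
  assumes "convex_nice C" "is_clustering X C" "adapted_centers C T" "x \<in> X"
  shows "adapted_centers C (fst (seq_step (T, n) x))"
proof -
  obtain A where A: "A \<in> C" "x \<in> A" using assms(2,4) unfolding is_clustering_def by blast
  have xA: "x \<in> convex hull A" using A(2) by (rule hull_inc)
  let ?i = "closest_idx T x"
  note closest = closest_center_in_hull[OF assms(1,3) A(1) xA]
  define c where "c = 1 / real (n ! ?i + 1)"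
  define t where "t = T ! ?i + c *\<^sub>R (x - T ! ?i)"
  have "t = (1 - c) *\<^sub>R T ! ?i + c *\<^sub>R x" unfolding t_def by (simp add: algebra_simps)
  then have tA: "t \<in> convex hull A"
    using convexD_alt[OF convex_convex_hull closest(2) xA, of c] by (simp add: c_def)
  have step: "fst (seq_step (T, n) x) = T[?i := t]"
    unfolding seq_step_def t_def c_def by (simp add: Let_def)
  have "\<exists>B\<in>C. T[?i := t] ! k \<in> convex hull B" if "k < length T" for k
    using assms(3) that A(1) tA unfolding adapted_centers_def by (cases "k = ?i") auto
  moreover have "\<exists>k<length T. T[?i := t] ! k \<in> convex hull B" if B: "B \<in> C" for B
  proof -
    obtain k where k: "k < length T" "T ! k \<in> convex hull B"
      using assms(3) B unfolding adapted_centers_def by blast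
    show ?thesis
    proof (cases "k = ?i")
      case True
      then have "B = A" using convex_nice_hulls_disjoint[OF assms(1) B A(1)] k closest by auto
      then show ?thesis using True tA k(1) by auto
    next
      case False
      then show ?thesis using k by auto
    qed
  qed
  ultimately show ?thesis unfolding step adapted_centers_def by simp
qed

lemma foldl_seq_step_adapted:
  assumes "convex_nice C" "is_clustering X C"
  shows "adapted_centers C T \<Longrightarrow> set ys \<subseteq> X \<Longrightarrow> adapted_centers C (fst (foldl seq_step (T, n) ys))"
proof (induction ys arbitrary: T n)
  case Nil
  then show ?case by simp
next
  case (Cons y ys)
  obtain T' n' where step: "seq_step (T, n) y = (T', n')" by fastforce
  have "adapted_centers C T'"
    using seq_step_adapted[OF assms Cons.prems(1), of y n] Cons.prems(2) step by simp
  then show ?case using Cons.IH[of T' n'] Cons.prems(2) step by simp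
qed

text \<open>Adapted centres induce a refinement: two points with the same nearest centre
  have that centre in both of their cluster hulls, which are therefore equal.\<close>
lemma adapted_centers_refines:
  assumes "convex_nice C" "is_clustering X C" "adapted_centers C T"
  shows "refines (induced_clustering T X) C"
  unfolding refines_def
proof (intro allI impI)
  fix x y assume "same_cluster (induced_clustering T X) x y"
  then have xy: "x \<in> X" "y \<in> X" "closest_idx T x = closest_idx T y"
    unfolding same_cluster_def induced_clustering_def by auto
  obtain A B where AB: "A \<in> C" "x \<in> A" "B \<in> C" "y \<in> B"
    using assms(2) xy(1,2) unfolding is_clustering_def by blast
  have "T ! closest_idx T x \<in> convex hull A"
    using closest_center_in_hull(2)[OF assms(1,3) AB(1) hull_inc[OF AB(2)]] .
  moreover have "T ! closest_idx T x \<in> convex hull B"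
    using closest_center_in_hull(2)[OF assms(1,3) AB(3) hull_inc[OF AB(4)]] xy(3) by simp
  ultimately have "A = B" by (rule convex_nice_hulls_disjoint[OF assms(1) AB(1,3)])
  then show "same_cluster C x y" using AB unfolding same_cluster_def by auto
qed

lemma adapted_centers_initial:
  assumes "is_clustering X C" "set T \<subseteq> X" "\<forall>A\<in>C. set T \<inter> A \<noteq> {}"
  shows "adapted_centers C T"
  unfolding adapted_centers_def
proof (intro conjI allI impI ballI)
  fix i assume "i < length T"
  then have "T ! i \<in> X" using assms(2) nth_mem by blast
  then obtain A where "A \<in> C" "T ! i \<in> A" using assms(1) unfolding is_clustering_def by blast
  then show "\<exists>A\<in>C. T ! i \<in> convex hull A" by (blast intro: hull_inc)
next
  fix A assume "A \<in> C"
  then obtain z where "z \<in> set T" "z \<in> A" using assms(3) by blast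
  then obtain i where "i < length T" "T ! i \<in> A" by (metis in_set_conv_nth)
  then show "\<exists>i<length T. T ! i \<in> convex hull A" by (blast intro: hull_inc)
qed

lemma seq_means_refines:
  assumes "convex_nice C" "is_clustering X C" "set xs \<subseteq> X"
    and "\<forall>A\<in>C. set (take l xs) \<inter> A \<noteq> {}"
  shows "refines (induced_clustering (seq_means l xs) X) C"
proof -
  have "set (take l xs) \<subseteq> X" using set_take_subset assms(3) by (rule order_trans)
  then have "adapted_centers C (take l xs)"
    by (rule adapted_centers_initial[OF assms(2) _ assms(4)])
  moreover have "set (drop l xs) \<subseteq> X" using set_drop_subset assms(3) by (rule order_trans)
  ultimately have "adapted_centers C (seq_means l xs)"
    unfolding seq_means_def by (rule foldl_seq_step_adapted[OF assms(1,2)])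
  then show ?thesis by (rule adapted_centers_refines[OF assms(1,2)])
qed

theorem mainTheorem10:
  fixes X :: "'a::euclidean_space set" and C :: "'a set set" and l :: nat
  assumes "finite X"
    and "is_clustering X C"
    and "convex_nice C"
    and "card C \<le> l" and "l \<le> card X"
  shows "measure_pmf.prob (pmf_of_set (permutations_of_set X))
           {xs. refines (induced_clustering (seq_means l xs) X) C}
         \<ge> 1 - real (card C) *
               exp (- (real (Min (card ` C)) / real (card X)) * real l)"
proof -
  let ?P = "pmf_of_set (permutations_of_set X)"
  define Miss where "Miss = (\<Union>A\<in>C. {xs. set (take l xs) \<inter> A = {}})"
  have CX: "\<And>A. A \<in> C \<Longrightarrow> A \<subseteq> X" using assms(2) unfolding is_clustering_def by blast
  then have "finite C" using assms(1) by (meson Pow_iff finite_Pow_iff finite_subset subsetI)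
  have "AE xs in ?P. xs \<in> UNIV - Miss \<longrightarrow> refines (induced_clustering (seq_means l xs) X) C"
    using assms(1) seq_means_refines[OF assms(3,2)]
    by (auto simp: AE_measure_pmf_iff Miss_def dest: permutations_of_setD)
  then have "measure_pmf.prob ?P (UNIV - Miss)
             \<le> measure_pmf.prob ?P {xs. refines (induced_clustering (seq_means l xs) X) C}"
    by (intro measure_pmf.finite_measure_mono_AE) auto
  moreover have "measure_pmf.prob ?P (UNIV - Miss) = 1 - measure_pmf.prob ?P Miss"
    using measure_pmf.prob_compl[of Miss ?P] by simp
  ultimately show ?thesis
    using prob_prefix_misses_some_cluster[OF assms(1) \<open>finite C\<close> CX assms(5)]
    unfolding Miss_def by linarith
qed

end
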